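(* Let $G$ be a finite group with identity $e$, and let $\mathcal{B}$ be the set of bases of a rank-$3$ matroid on ground set $G$ invariant under left multiplication by $G$. Let $g,h\in G$ be such that each of the triples $(e,g,gh)$, $(e,g,h)$, $(e,g,g^{-1})$ consists of pairwise distinct elements. If $f_{g,gh}\subseteq\mathcal{B}$, then $f_{g,g^{-1}}\subseteq\mathcal{B}$ or $f_{g,h}\subseteq\mathcal{B}$.
   Context: $G$ acts on $\binom{G}{3}$ by $x\cdot\{a,b,c\}=\{xa,xb,xc\}$. For $g,h\in G$ with $e,g,h$ pairwise distinct, $f_{g,h}=\{\{a,ag,ah\}\mid a\in G\}$ (a $G$-orbit, with $f_{g,h}=f_{h,g}$). A matroid on ground set $G$ is invariant if its set of bases is preserved by this action. *)

theory Defs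
  imports "HOL-Algebra.Group"
begin

definition matroid_bases :: "'a set \<Rightarrow> 'a set set \<Rightarrow> bool" where
  "matroid_bases E \<B> \<longleftrightarrow> finite E \<and> \<B> \<noteq> {} \<and> (\<forall>b\<in>\<B>. b \<subseteq> E) \<and>
     (\<forall>b1\<in>\<B>. \<forall>b2\<in>\<B>. \<forall>x\<in>b1 - b2. \<exists>y\<in>b2 - b1. insert y (b1 - {x}) \<in> \<B>)"

definition matroid_rank_eq :: "'a set set \<Rightarrow> nat \<Rightarrow> bool" where
  "matroid_rank_eq \<B> r \<longleftrightarrow> (\<forall>b\<in>\<B>. card b = r)"

definition left_invariant :: "('a, 'm) monoid_scheme \<Rightarrow> 'a set set \<Rightarrow> bool" where
  "left_invariant G \<B> \<longleftrightarrow>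
     (\<forall>x\<in>carrier G. (\<lambda>b. (\<lambda>a. x \<otimes>\<^bsub>G\<^esub> a) ` b) ` \<B> = \<B>)"

definition orbit_f :: "('a, 'm) monoid_scheme \<Rightarrow> 'a \<Rightarrow> 'a \<Rightarrow> 'a set set" where
  "orbit_f G g h = {{a, a \<otimes>\<^bsub>G\<^esub> g, a \<otimes>\<^bsub>G\<^esub> h} | a. a \<in> carrier G}"

end

theory Submission
  imports Defs
begin

text \<open>Translating the base {e, g, gh} by g\<inverse> gives the base {g\<inverse>, e, h}. Exchanging gh out of
  {e, g, gh} against this second base yields a base {e, g, y} with y = g\<inverse> or y = h, and by
  invariance such a single base already forces the whole orbit f_{g,y} into the bases.
  (If gh = g\<inverse> there is nothing to exchange, but then f_{g,gh} = f_{g,g\<inverse>}.)\<close>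

lemma matroid_bases_exchange:
  assumes "matroid_bases E \<B>" and "b1 \<in> \<B>" and "b2 \<in> \<B>" and "x \<in> b1 - b2"
  obtains y where "y \<in> b2 - b1" and "insert y (b1 - {x}) \<in> \<B>"
  using assms unfolding matroid_bases_def by blast

lemma left_invariant_translate:
  assumes "left_invariant G \<B>" and "x \<in> carrier G" and "b \<in> \<B>"
  shows "(\<lambda>a. x \<otimes>\<^bsub>G\<^esub> a) ` b \<in> \<B>"
  using assms unfolding left_invariant_def by blast

lemma (in group) orbit_f_subset_iff:
  assumes "left_invariant G \<B>" and "g \<in> carrier G" and "y \<in> carrier G"
  shows "orbit_f G g y \<subseteq> \<B> \<longleftrightarrow> {\<one>, g, y} \<in> \<B>"
proof
  assume "orbit_f G g y \<subseteq> \<B>"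
  moreover have "{\<one>, \<one> \<otimes> g, \<one> \<otimes> y} \<in> orbit_f G g y"
    unfolding orbit_f_def by blast
  ultimately show "{\<one>, g, y} \<in> \<B>"
    using assms(2,3) by auto
next
  assume base: "{\<one>, g, y} \<in> \<B>"
  show "orbit_f G g y \<subseteq> \<B>"
  proof
    fix s assume "s \<in> orbit_f G g y"
    then obtain a where a: "a \<in> carrier G" and s: "s = {a, a \<otimes> g, a \<otimes> y}"
      unfolding orbit_f_def by blast
    have "(\<lambda>b. a \<otimes> b) ` {\<one>, g, y} = s"
      using a s by simp
    then show "s \<in> \<B>"
      using left_invariant_translate[OF assms(1) a base] by simp
  qed
qed

lemma (in group) orbit_f_inv_or_orbit_f_subset:
  assumes "matroid_bases E \<B>" and "left_invariant G \<B>"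
    and g: "g \<in> carrier G" and h: "h \<in> carrier G"
    and distinct_gh: "distinct [\<one>, g, g \<otimes> h]" and "distinct [\<one>, g, h]"
    and "orbit_f G g (g \<otimes> h) \<subseteq> \<B>"
  shows "orbit_f G g (inv g) \<subseteq> \<B> \<or> orbit_f G g h \<subseteq> \<B>"
proof -
  note orbit_iff = orbit_f_subset_iff[OF \<open>left_invariant G \<B>\<close> g]
  have base: "{\<one>, g, g \<otimes> h} \<in> \<B>"
    using orbit_iff g h \<open>orbit_f G g (g \<otimes> h) \<subseteq> \<B>\<close> by simp
  have "(\<lambda>a. inv g \<otimes> a) ` {\<one>, g, g \<otimes> h} = {inv g, \<one>, h}"
    using g h by (simp add: m_assoc[symmetric])
  then have base': "{inv g, \<one>, h} \<in> \<B>"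
    using left_invariant_translate[OF \<open>left_invariant G \<B>\<close> inv_closed[OF g] base] by metis
  show ?thesis
  proof (cases "g \<otimes> h = inv g")
    case True
    then show ?thesis using orbit_iff base g by simp
  next
    case False
    have "g \<otimes> h \<noteq> h"
      using g h \<open>distinct [\<one>, g, h]\<close> by auto
    then have "g \<otimes> h \<in> {\<one>, g, g \<otimes> h} - {inv g, \<one>, h}"
      using False distinct_gh by auto
    then obtain y where y: "y \<in> {inv g, \<one>, h} - {\<one>, g, g \<otimes> h}"
      and exchanged: "insert y ({\<one>, g, g \<otimes> h} - {g \<otimes> h}) \<in> \<B>"
      using matroid_bases_exchange[OF \<open>matroid_bases E \<B>\<close> base base'] by blast
    have "{\<one>, g, g \<otimes> h} - {g \<otimes> h} = {\<one>, g}"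
      using distinct_gh by auto
    with exchanged have "{\<one>, g, y} \<in> \<B>"
      by (simp add: insert_commute)
    moreover have "y = inv g \<or> y = h"
      using y by auto
    ultimately show ?thesis
      using orbit_iff g h by auto
  qed
qed

theorem mainTheorem9:
  fixes G :: "('a, 'm) monoid_scheme" and \<B> :: "'a set set" and g h :: 'a
  assumes "group G" and "finite (carrier G)"
    and "matroid_bases (carrier G) \<B>" and "matroid_rank_eq \<B> 3"
    and "left_invariant G \<B>"
    and "g \<in> carrier G" and "h \<in> carrier G"
    and "distinct [\<one>\<^bsub>G\<^esub>, g, g \<otimes>\<^bsub>G\<^esub> h]"
    and "distinct [\<one>\<^bsub>G\<^esub>, g, h]"
    and "distinct [\<one>\<^bsub>G\<^esub>, g, inv\<^bsub>G\<^esub> g]"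
    and "orbit_f G g (g \<otimes>\<^bsub>G\<^esub> h) \<subseteq> \<B>"
  shows "orbit_f G g (inv\<^bsub>G\<^esub> g) \<subseteq> \<B> \<or> orbit_f G g h \<subseteq> \<B>"
  using group.orbit_f_inv_or_orbit_f_subset[OF assms(1,3,5,6,7,8,9,11)] .

end
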